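(* Let $p$ be a prime, let $n\ge 0$ and $k\ge 0$ be integers, and let $a\in\mathbb{Z}_p$. For $x=a+p^n u$ with $u$ a variable, $\delta^k x$ is a polynomial in $u$ with coefficients in $\mathbb{Q}_p$ of degree at most $p^k$; write $\delta^k(a+p^n u)=\sum_{j=0}^{p^k} c^k_{a,j}u^j$ with $c^k_{a,j}\in\mathbb{Q}_p$. Then: (1) $|c^k_{a,0}|_p\le 1$; (2) $|c^k_{a,1}|_p=p^{-(n-k)}$; (3) $|c^k_{a,j}|_p\le p^{-((n-k+1)j-1)}$ for $2\le j\le p^k$.
   Context: $\mathbb{Q}_p$ is the field of $p$-adic numbers with $p$-adic norm $|\cdot|_p$ normalized by $|p|_p=p^{-1}$, and $\mathbb{Z}_p=\{x\in\mathbb{Q}_p:|x|_p\le 1\}$. The operator $\delta$ is the Fermat quotient operator $\delta y=(y-y^p)/p$, applied formally to polynomials in $u$ with $\mathbb{Q}_p$-coefficients, and $\delta^k$ is its $k$-th iterate ($\delta^0$ is the identity). *)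

theory Defs
  imports Complex_Main "HOL-Computational_Algebra.Computational_Algebra"
begin

definition padic_val_rat :: "nat \<Rightarrow> rat \<Rightarrow> int" where
  "padic_val_rat p q = (case quotient_of q of (a, b) \<Rightarrow>
      int (multiplicity (int p) a) - int (multiplicity (int p) b))"

definition padic_norm_rat :: "nat \<Rightarrow> rat \<Rightarrow> real" where
  "padic_norm_rat p q = (if q = 0 then 0 else real p powr (- real_of_int (padic_val_rat p q)))"

(* This characterises (Q_p, |.|_p) up to isometric isomorphism. *)
definition is_Qp :: "nat \<Rightarrow> ('a::field_char_0 \<Rightarrow> real) \<Rightarrow> bool" where
  "is_Qp p N \<longleftrightarrow>
     (\<forall>x. 0 \<le> N x) \<and> (\<forall>x. N x = 0 \<longleftrightarrow> x = 0) \<and>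
     (\<forall>x y. N (x * y) = N x * N y) \<and>
     (\<forall>x y. N (x + y) \<le> max (N x) (N y)) \<and>
     (\<forall>q. N (of_rat q) = padic_norm_rat p q) \<and>
     (\<forall>x e. e > 0 \<longrightarrow> (\<exists>q. N (x - of_rat q) < e)) \<and>
     (\<forall>X::nat \<Rightarrow> 'a. (\<forall>e>0. \<exists>M. \<forall>m\<ge>M. \<forall>m'\<ge>M. N (X m - X m') < e) \<longrightarrow>
        (\<exists>L. \<forall>e>0. \<exists>M. \<forall>m\<ge>M. N (X m - L) < e))"

definition fermat_delta :: "nat \<Rightarrow> 'a::field poly \<Rightarrow> 'a poly" where
  "fermat_delta p f = smult (inverse (of_nat p)) (f - f ^ p)"

end

theory Submission
  imports Defs "HOL-Number_Theory.Residues"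
begin

hide_const (open) UnivPoly.coeff Module.smult

text \<open>
  Call f = sum c_j u^j R-bounded if |c_0| <= 1, |c_1| = R and |c_j| <= p (R/p)^j for all j >= 1.
  The polynomial a + p^n u is p^-n-bounded, and delta turns an R-bounded f into an
  (R p)-bounded one. Indeed, the bounds make the j-th coefficient of f^p at most R^j, so dividing
  f - f^p by p gives the bounds in degrees j >= 2; the constant term stays integral since
  |c - c^p| <= 1/p whenever |c| <= 1 (Fermat's little theorem for rationals, extended to Z_p by
  density); and the linear coefficient of f - f^p is (1 - p c_0^(p-1)) c_1, whose first factor
  is a unit.
\<close>

lemma int_power_prime_cong:
  fixes z :: int
  assumes "prime p"
  shows "[z ^ p = z] (mod int p)"
proof -
  define m where "m = nat (z mod int p)"
  have "p > 0"
    using assms prime_gt_0_nat by blast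
  then have z_m: "[z = int m] (mod int p)"
    unfolding m_def by (simp add: cong_def)
  have "[m ^ p = m] (mod p)"
  proof (cases "p dvd m")
    case True
    then show ?thesis
      using \<open>p > 0\<close> by (simp add: cong_def dvd_power dvd_trans)
  next
    case False
    then have "[m * m ^ (p - 1) = m * 1] (mod p)"
      using fermat_theorem[OF assms] by (blast intro: cong_mult cong_refl)
    then show ?thesis
      using \<open>p > 0\<close> by (metis Suc_diff_1 mult_1_right power_Suc)
  qed
  then have "[int m ^ p = int m] (mod int p)"
    by (metis cong_int_iff of_nat_power)
  then show ?thesis
    using z_m cong_pow cong_sym cong_trans by metis
qed

lemma coeff_power_1:
  fixes f :: "'a::comm_ring_1 poly"
  shows "coeff (f ^ n) 1 = of_nat n * coeff f 0 ^ (n - 1) * coeff f 1"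
proof (induction n)
  case (Suc n)
  have "coeff (f ^ Suc n) 1 = coeff f 0 * coeff (f ^ n) 1 + coeff f 1 * coeff f 0 ^ n"
    by (simp add: coeff_mult coeff_0_power)
  then show ?case
    unfolding Suc by (cases n) (simp_all add: algebra_simps)
qed simp

lemma degree_fermat_delta_le:
  assumes "p > 0"
  shows "degree (fermat_delta p f) \<le> degree f * p"
proof -
  have "degree (fermat_delta p f) \<le> max (degree f) (degree (f ^ p))"
    unfolding fermat_delta_def by (metis degree_diff_le_max degree_smult_le order_trans)
  also have "\<dots> \<le> degree f * p"
    using assms degree_power_le[of f p] by (simp add: mult.commute)
  finally show ?thesis .
qed

lemma degree_fermat_delta_iterate_le:
  assumes "p > 0"
  shows "degree ((fermat_delta p ^^ k) f) \<le> degree f * p ^ k"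
proof (induction k)
  case (Suc k)
  then show ?case
    using degree_fermat_delta_le[OF assms, of "(fermat_delta p ^^ k) f"]
    by (simp add: mult_right_mono order_trans mult.assoc mult.commute)
qed simp

locale nonarch_abs =
  fixes N :: "'a::field \<Rightarrow> real"
  assumes N_nonneg: "0 \<le> N x"
    and N_eq_0_iff: "N x = 0 \<longleftrightarrow> x = 0"
    and N_mult: "N (x * y) = N x * N y"
    and N_add_le: "N (x + y) \<le> max (N x) (N y)"
begin

lemma N_0 [simp]: "N 0 = 0"
  by (simp add: N_eq_0_iff)

lemma N_1 [simp]: "N 1 = 1"
  using N_mult[of 1 1] N_eq_0_iff[of 1] by simp

lemma N_minus [simp]: "N (- x) = N x"
proof -
  have "N (-1) * N (-1) = 1"
    using N_mult[of "-1" "-1"] by simp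
  then have "N (-1) = 1"
    using N_nonneg[of "-1"] by (metis abs_of_nonneg power2_eq_square real_sqrt_abs real_sqrt_one)
  then show ?thesis
    using N_mult[of "-1" x] by simp
qed

lemma N_diff_le: "N (x - y) \<le> max (N x) (N y)"
  using N_add_le[of x "- y"] by simp

lemma N_power: "N (x ^ n) = N x ^ n"
  by (induction n) (simp_all add: N_mult)

lemma N_inverse: "N (inverse x) = inverse (N x)"
  using N_mult[of "inverse x" x] N_eq_0_iff[of x] by (cases "x = 0") (simp_all add: field_simps)

lemma N_of_nat_le_1: "N (of_nat m) \<le> 1"
proof (induction m)
  case (Suc m)
  then show ?case
    using N_add_le[of 1 "of_nat m"] by simp
qed simp

lemma N_of_int_le_1: "N (of_int z) \<le> 1"
  using N_of_nat_le_1[of "nat \<bar>z\<bar>"] N_minus[of "of_int z"] by (cases "z \<ge> 0") simp_all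

lemma N_sum_le:
  assumes "0 \<le> B" and "\<And>i. i \<in> A \<Longrightarrow> N (f i) \<le> B"
  shows "N (sum f A) \<le> B"
  using assms
proof (induction A rule: infinite_finite_induct)
  case (insert i A)
  then have "N (f i) \<le> B" and "N (sum f A) \<le> B"
    by simp_all
  then show ?case
    using N_add_le[of "f i" "sum f A"] insert.hyps by simp
qed simp_all

lemma N_diff_eq_left:
  assumes "N y < N x"
  shows "N (x - y) = N x"
proof -
  have "N x \<le> max (N (x - y)) (N y)"
    using N_add_le[of "x - y" y] by simp
  then show ?thesis
    using N_diff_le[of x y] assms by linarith
qed

lemma N_power_diff_le:
  assumes "N x \<le> 1" and "N y \<le> 1"
  shows "N (x ^ m - y ^ m) \<le> N (x - y)"
proof (cases m)
  case (Suc l)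
  have "N (\<Sum>i<Suc l. x ^ i * y ^ (l - i)) \<le> 1"
    using assms by (intro N_sum_le) (simp_all add: N_mult N_power N_nonneg mult_le_one power_le_one)
  then show ?thesis
    unfolding Suc diff_power_eq_sum N_mult using N_nonneg[of "x - y"] by (simp add: mult_left_le)
qed (simp add: N_nonneg)

text \<open>
  Of the m factors of a product contributing to the j-th coefficient of f^m, at most j have
  positive index, so B enters at most j times.
\<close>
lemma N_coeff_power_le:
  fixes f :: "'a poly"
  assumes "N (coeff f 0) \<le> 1" and "1 \<le> B" and "0 \<le> r"
    and "\<And>j. 1 \<le> j \<Longrightarrow> N (coeff f j) \<le> B * r ^ j"
  shows "N (coeff (f ^ m) j) \<le> (B * r) ^ j"
proof (induction m arbitrary: j)
  case 0
  then show ?case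
    using assms(2,3) by (cases j) simp_all
next
  case (Suc m)
  have "N (coeff f l * coeff (f ^ m) (j - l)) \<le> (B * r) ^ j" if "l \<le> j" for l
  proof (cases "l = 0")
    case True
    then show ?thesis
      using mult_mono[OF assms(1) Suc[of j]] N_nonneg by (simp add: N_mult)
  next
    case False
    have "N (coeff f l * coeff (f ^ m) (j - l)) \<le> (B * r ^ l) * (B * r) ^ (j - l)"
      unfolding N_mult using assms(2,3) assms(4)[of l] False Suc[of "j - l"] N_nonneg
      by (intro mult_mono) auto
    also have "\<dots> = B ^ Suc (j - l) * r ^ j"
      using \<open>l \<le> j\<close> by (simp add: power_mult_distrib power_add[symmetric])
    also have "\<dots> \<le> B ^ j * r ^ j"
      using False \<open>l \<le> j\<close> assms(2,3) by (intro mult_right_mono power_increasing) auto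
    finally show ?thesis
      by (simp add: power_mult_distrib)
  qed
  moreover have "coeff (f ^ Suc m) j = (\<Sum>l\<le>j. coeff f l * coeff (f ^ m) (j - l))"
    by (simp add: coeff_mult)
  ultimately show ?case
    using assms(2,3) by (auto intro: N_sum_le)
qed

end

locale Qp_model =
  fixes p :: nat and N :: "'a::field_char_0 \<Rightarrow> real"
  assumes prime: "prime p" and is_Qp: "is_Qp p N"

sublocale Qp_model \<subseteq> nonarch_abs N
  using is_Qp unfolding is_Qp_def by unfold_locales auto

context Qp_model
begin

lemma N_of_rat: "N (of_rat q) = padic_norm_rat p q"
  using is_Qp unfolding is_Qp_def by blast

lemma rat_approx: "e > 0 \<Longrightarrow> \<exists>q. N (x - of_rat q) < e"
  using is_Qp unfolding is_Qp_def by blast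

lemma p_gt_1: "p > 1"
  using prime prime_gt_1_nat by blast

lemma N_of_int:
  assumes "z \<noteq> 0"
  shows "N (of_int z) = real p powr - multiplicity (int p) z"
proof -
  have "padic_val_rat p (of_int z) = int (multiplicity (int p) z)"
    unfolding padic_val_rat_def by (simp add: quotient_of_int)
  then show ?thesis
    using N_of_rat[of "of_int z"] assms by (simp add: padic_norm_rat_def)
qed

lemma N_of_nat_p: "N (of_nat p) = 1 / real p"
proof -
  have "multiplicity (int p) (int p) = 1"
    using p_gt_1 by (intro multiplicity_self) auto
  then show ?thesis
    using N_of_int[of "int p"] p_gt_1 by (simp add: powr_minus_divide)
qed

lemma N_inverse_p: "N (inverse (of_nat p)) = real p"
  using p_gt_1 by (simp add: N_inverse N_of_nat_p)

lemma N_of_int_dvd_le: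
  assumes "int p dvd z"
  shows "N (of_int z) \<le> 1 / real p"
proof -
  obtain w where "z = int p * w"
    using assms by blast
  then have "N (of_int z) = 1 / real p * N (of_int w)"
    by (simp add: N_mult N_of_nat_p)
  also have "\<dots> \<le> 1 / real p"
    using N_of_int_le_1[of w] p_gt_1 by (simp add: divide_right_mono)
  finally show ?thesis .
qed

lemma N_of_int_not_dvd: "\<not> int p dvd z \<Longrightarrow> N (of_int z) = 1"
  using p_gt_1 by (cases "z = 0") (simp_all add: N_of_int not_dvd_imp_multiplicity_0)

text \<open>
  Clearing the denominator b of q = a/b, a unit since |q| <= 1, reduces this to
  a b^p - b a^p = 0 (mod p).
\<close>
lemma N_of_rat_sub_power_le:
  assumes "N (of_rat q) \<le> 1"
  shows "N (of_rat q - of_rat q ^ p) \<le> 1 / real p"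
proof -
  obtain a b where ab: "quotient_of q = (a, b)"
    by (cases "quotient_of q")
  define y :: 'a where "y = of_rat q"
  have "b > 0" and "coprime a b"
    using ab quotient_of_denom_pos quotient_of_coprime by blast+
  have y_b: "y * of_int b = of_int a"
    using ab \<open>b > 0\<close> unfolding y_def by (simp add: quotient_of_div[OF ab] of_rat_divide)
  have "\<not> int p dvd b"
  proof
    assume "int p dvd b"
    then have "\<not> int p dvd a"
      using \<open>coprime a b\<close> prime
      by (meson coprime_common_divisor not_prime_unit prime_nat_int_transfer)
    then have "1 = N y * N (of_int b)"
      using y_b N_of_int_not_dvd N_mult by metis
    also have "\<dots> \<le> 1 * (1 / real p)"
      using assms \<open>int p dvd b\<close> N_nonneg unfolding y_def
      by (intro mult_mono N_of_int_dvd_le) auto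
    finally show False
      using p_gt_1 by simp
  qed
  then have N_b: "N (of_int b) = 1"
    by (rule N_of_int_not_dvd)
  have "[a * b ^ p - b * a ^ p = a * b - b * a] (mod int p)"
    using int_power_prime_cong[OF prime] by (intro cong_diff cong_mult cong_refl)
  then have "N (of_int (a * b ^ p - b * a ^ p)) \<le> 1 / real p"
    by (intro N_of_int_dvd_le) (simp add: cong_0_iff)
  moreover have "(y - y ^ p) * of_int b ^ Suc p = (y * of_int b) * of_int b ^ p - of_int b * (y * of_int b) ^ p"
    by (simp add: algebra_simps power_mult_distrib)
  then have "(y - y ^ p) * of_int b ^ Suc p = of_int (a * b ^ p - b * a ^ p)"
    by (simp add: y_b)
  ultimately have "N ((y - y ^ p) * of_int b ^ Suc p) \<le> 1 / real p"
    by metis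
  then show ?thesis
    unfolding N_mult N_power N_b y_def by simp
qed

lemma N_sub_power_le:
  assumes "N x \<le> 1"
  shows "N (x - x ^ p) \<le> 1 / real p"
proof -
  obtain q where x_q: "N (x - of_rat q) < 1 / real p"
    using rat_approx[of "1 / real p" x] p_gt_1 by auto
  define y :: 'a where "y = of_rat q"
  have "1 / real p < 1"
    using p_gt_1 by simp
  then have "N (x - y) < 1"
    using x_q unfolding y_def by linarith
  then have "N y \<le> 1"
    using N_diff_le[of x "x - y"] assms by simp
  then have "N (y - y ^ p) \<le> 1 / real p"
    unfolding y_def by (rule N_of_rat_sub_power_le)
  moreover have "N ((x - y) - (x ^ p - y ^ p)) \<le> 1 / real p"
    using N_diff_le[of "x - y" "x ^ p - y ^ p"] N_power_diff_le[OF assms \<open>N y \<le> 1\<close>, of p] x_q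
    unfolding y_def by linarith
  moreover have "x - x ^ p = (y - y ^ p) + ((x - y) - (x ^ p - y ^ p))"
    by simp
  ultimately show ?thesis
    using N_add_le by (metis max.bounded_iff order_trans)
qed

definition coeff_bounded :: "real \<Rightarrow> 'a poly \<Rightarrow> bool" where
  "coeff_bounded R f \<longleftrightarrow> N (coeff f 0) \<le> 1 \<and> N (coeff f 1) = R
     \<and> (\<forall>j\<ge>1. N (coeff f j) \<le> real p * (R / real p) ^ j)"

lemma N_coeff_fermat_delta:
  "N (coeff (fermat_delta p f) j) = real p * N (coeff f j - coeff (f ^ p) j)"
  by (simp add: fermat_delta_def N_mult N_inverse_p)

lemma coeff_bounded_fermat_delta:
  assumes "coeff_bounded R f"
  shows "coeff_bounded (R * real p) (fermat_delta p f)"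
proof -
  define c where "c = coeff f 0"
  have c: "N c \<le> 1" and lin: "N (coeff f 1) = R"
    and higher: "\<And>j. 1 \<le> j \<Longrightarrow> N (coeff f j) \<le> real p * (R / real p) ^ j"
    using assms unfolding coeff_bounded_def c_def by auto
  have "R \<ge> 0"
    using lin N_nonneg by metis
  have delta_const: "N (coeff (fermat_delta p f) 0) \<le> 1"
    unfolding N_coeff_fermat_delta coeff_0_power c_def[symmetric]
    using mult_left_mono[OF N_sub_power_le[OF c], of "real p"] p_gt_1 by simp
  have "N (of_nat p * c ^ (p - 1)) \<le> 1 / real p * 1"
    unfolding N_mult N_power N_of_nat_p using c N_nonneg by (intro mult_left_mono power_le_one) auto
  also have "\<dots> < 1"
    using p_gt_1 by simp
  finally have "N (1 - of_nat p * c ^ (p - 1)) = 1"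
    using N_diff_eq_left by simp
  moreover have "coeff f 1 - coeff (f ^ p) 1 = (1 - of_nat p * c ^ (p - 1)) * coeff f 1"
    unfolding coeff_power_1 c_def by (simp add: algebra_simps)
  ultimately have delta_lin: "N (coeff (fermat_delta p f) 1) = R * real p"
    unfolding N_coeff_fermat_delta using lin by (simp add: N_mult)
  have "N (coeff (fermat_delta p f) j) \<le> real p * (R * real p / real p) ^ j" if "1 \<le> j" for j
  proof -
    have "real p * (R / real p) ^ j \<le> real p ^ j * (R / real p) ^ j"
      using that p_gt_1 \<open>R \<ge> 0\<close> by (intro mult_right_mono) (auto simp: power_increasing[of 1, simplified])
    then have "N (coeff f j) \<le> R ^ j"
      using higher[OF that] p_gt_1 by (simp add: power_mult_distrib[symmetric])
    moreover have "N (coeff (f ^ p) j) \<le> (real p * (R / real p)) ^ j"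
      using c higher p_gt_1 \<open>R \<ge> 0\<close> unfolding c_def by (intro N_coeff_power_le) auto
    ultimately have "N (coeff f j - coeff (f ^ p) j) \<le> R ^ j"
      using N_diff_le[of "coeff f j" "coeff (f ^ p) j"] p_gt_1 by simp
    then show ?thesis
      unfolding N_coeff_fermat_delta using p_gt_1 by simp
  qed
  then show ?thesis
    unfolding coeff_bounded_def using delta_const delta_lin by blast
qed

lemma coeff_bounded_linear:
  assumes "N a \<le> 1"
  shows "coeff_bounded (real p powr - real n) [:a, of_nat p ^ n:]"
proof -
  have N_lin: "N (of_nat p ^ n) = real p powr - real n"
    using p_gt_1 by (simp add: N_power N_of_nat_p powr_minus powr_realpow power_one_over inverse_eq_divide)
  have "N (coeff [:a, of_nat p ^ n:] j) \<le> real p * (real p powr - real n / real p) ^ j"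
    if "1 \<le> j" for j
    using that N_lin p_gt_1 by (cases "j = 1") (auto simp: coeff_pCons split: nat.split)
  then show ?thesis
    unfolding coeff_bounded_def using assms N_lin by simp
qed

lemma coeff_bounded_fermat_delta_iterate:
  assumes "N a \<le> 1"
  shows "coeff_bounded (real p powr (real k - real n)) ((fermat_delta p ^^ k) [:a, of_nat p ^ n:])"
proof (induction k)
  case 0
  then show ?case
    using coeff_bounded_linear[OF assms] by simp
next
  case (Suc k)
  have "real p powr (real k - real n) * real p = real p powr (real (Suc k) - real n)"
    by (simp add: powr_mult_base mult.commute add.commute add_diff_eq)
  then show ?case
    using coeff_bounded_fermat_delta[OF Suc] by simp
qed

end

lemma powr_coeff_bound_eq:
  assumes "p > 0"
  shows "real p * (real p powr (real k - real n) / real p) ^ j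
    = real p powr - ((real n - real k + 1) * real j - 1)"
proof -
  have "real p * (real p powr (real k - real n) / real p) ^ j
      = real p powr 1 * (real p powr (real k - real n - 1)) powr real j"
    using assms by (simp add: powr_diff powr_realpow)
  also have "\<dots> = real p powr - ((real n - real k + 1) * real j - 1)"
    by (simp add: powr_powr powr_mult_base algebra_simps)
  finally show ?thesis .
qed

theorem lemma2p1:
  fixes p n k :: nat and N :: "'a::field_char_0 \<Rightarrow> real" and a :: 'a
  assumes "prime p" and "is_Qp p N" and "N a \<le> 1"
  shows "degree ((fermat_delta p ^^ k) [:a, of_nat p ^ n:]) \<le> p ^ k
    \<and> N (coeff ((fermat_delta p ^^ k) [:a, of_nat p ^ n:]) 0) \<le> 1
    \<and> N (coeff ((fermat_delta p ^^ k) [:a, of_nat p ^ n:]) 1) = real p powr (- (real n - real k))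
    \<and> (\<forall>j. 2 \<le> j \<and> j \<le> p ^ k \<longrightarrow>
         N (coeff ((fermat_delta p ^^ k) [:a, of_nat p ^ n:]) j)
           \<le> real p powr (- ((real n - real k + 1) * real j - 1)))"
proof -
  interpret Qp_model p N
    using assms(1,2) by unfold_locales
  have "p > 0"
    using p_gt_1 by simp
  have "degree ((fermat_delta p ^^ k) [:a, of_nat p ^ n:]) \<le> degree [:a, of_nat p ^ n:] * p ^ k"
    using \<open>p > 0\<close> by (rule degree_fermat_delta_iterate_le)
  also have "\<dots> \<le> p ^ k"
    by simp
  finally show ?thesis
    using coeff_bounded_fermat_delta_iterate[OF assms(3), of k n]
    unfolding coeff_bounded_def powr_coeff_bound_eq[OF \<open>p > 0\<close>] by simp
qed

end
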